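(* Let $L\ge 2$ and let $f_{i,j}:\mathbb{R}\to\mathbb{R}$, $i,j=0,\ldots,L-1$, be continuous $1$-periodic functions. For each $i$ and $\boldsymbol{y}=(y_0,\ldots,y_{L-1})\in\mathbb{R}^L$ define $$g_i(\boldsymbol{y}) := \int_{[0,1]^L} \prod_{j=0}^{L-1} f_{i,j}\bigl(x_j - x_{j+1} + y_j\bigr)\,\mathrm{d}\boldsymbol{x},\qquad x_L\equiv x_0.$$ Let $$\mathcal{I} := \int_{[0,1]^L}\cdots\int_{[0,1]^L} \prod_{i=0}^{L-1} g_i\bigl(\boldsymbol{y}_{i+1}-\boldsymbol{y}_i\bigr)\,\mathrm{d}\boldsymbol{y}_0\cdots\mathrm{d}\boldsymbol{y}_{L-1},$$ where each $\boldsymbol{y}_i\in[0,1]^L$ and $\boldsymbol{y}_L\equiv\boldsymbol{y}_0$. Then $$\mathcal{I} = \int_{[0,1]^L} \prod_{i=0}^{L-1} g_i\bigl(y_{i+1}-y_i,\,0,\ldots,0\bigr)\,\mathrm{d}\boldsymbol{y},$$ where now $\boldsymbol{y}=(y_0,\ldots,y_{L-1})\in[0,1]^L$ with scalar components and $y_L\equiv y_0$.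
   Context: Indices of integration variables are taken modulo $L$ (periodic boundary conditions). *)

theory Defs
  imports "HOL-Analysis.Analysis"
begin

definition unit_cube :: "nat \<Rightarrow> (nat \<Rightarrow> real) measure" where
  "unit_cube L = PiM {..<L} (\<lambda>_. restrict_space lborel {0..1})"

definition gfun :: "nat \<Rightarrow> (nat \<Rightarrow> nat \<Rightarrow> real \<Rightarrow> real) \<Rightarrow> nat \<Rightarrow> (nat \<Rightarrow> real) \<Rightarrow> real" where
  "gfun L f i y = (\<integral>x. (\<Prod>j<L. f i j (x j - x ((j + 1) mod L) + y j)) \<partial>unit_cube L)"

end

(*
  Translating every x_j by c_j modulo 1 preserves the uniform measure on [0,1]^L and turns
  g_i(y) into g_i(y_j + c_j - c_{j+1}); a telescoping choice of c moves all of y into the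
  first coordinate, so g_i(y) = g_i(sum_j y_j, 0, ..., 0), and by periodicity only the
  fractional part of sum_j y_j matters.  Hence the integrand of the left-hand side depends on
  the L vectors y_i only through s_i = frac (sum_j y_i j).  The fractional part of a sum of
  independent uniform variables on [0,1] is again uniform, so (y_i)_i |-> (s_i)_i pushes the
  product of L cubes forward to the cube itself, which gives the right-hand side.
*)

theory Submission
  imports Defs "HOL-Probability.Infinite_Product_Measure"
begin

abbreviation unit_interval :: "real measure" where
  "unit_interval \<equiv> restrict_space lborel {0..1}"

lemma space_unit_interval [simp]: "space unit_interval = {0..1}"
  by (simp add: space_restrict_space)

lemma prob_space_unit_interval: "prob_space unit_interval"
  by (rule prob_spaceI) (simp add: emeasure_restrict_space)

lemma borel_measurable_unit_interval_ident: "(\<lambda>t. t) \<in> borel_measurable unit_interval"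
  by (metis measurable_lborel1 measurable_ident_sets measurable_restrict_space1)

lemma borel_measurable_frac: "(frac :: real \<Rightarrow> real) \<in> borel_measurable borel"
  unfolding frac_def using borel_measurable_real_floor by (intro borel_measurable_diff) auto

lemma measurable_frac_unit_interval:
  assumes "g \<in> borel_measurable M"
  shows "(\<lambda>x. frac (g x)) \<in> M \<rightarrow>\<^sub>M unit_interval"
proof (rule measurable_restrict_space2)
  show "(\<lambda>x. frac (g x)) \<in> M \<rightarrow>\<^sub>M lborel"
    using measurable_compose[OF assms borel_measurable_frac] by (simp add: measurable_lborel2)
  show "(\<lambda>x. frac (g x)) \<in> space M \<rightarrow> {0..1}"
    by (auto simp: less_imp_le[OF frac_lt_1])
qed

lemma periodic_add_of_int:
  fixes h :: "real \<Rightarrow> 'a"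
  assumes per: "\<And>t. h (t + 1) = h t"
  shows "h (t + of_int k) = h t"
proof -
  have nat: "h (s + of_nat n) = h s" for s n
  proof (induction n)
    case (Suc n)
    then show ?case using per[of "s + of_nat n"] by (simp add: ac_simps)
  qed simp
  show ?thesis
  proof (cases "k \<ge> 0")
    case True
    then show ?thesis using nat[of t "nat k"] by simp
  next
    case False
    then show ?thesis using nat[of "t + of_int k" "nat (- k)"] by simp
  qed
qed

lemma nn_integral_lborel_shift:
  fixes g :: "real \<Rightarrow> ennreal"
  assumes "g \<in> borel_measurable borel"
  shows "(\<integral>\<^sup>+ t. g (t + c) \<partial>lborel) = (\<integral>\<^sup>+ t. g t \<partial>lborel)"
  using nn_integral_real_affine[OF assms, of 1 c] by (simp add: add.commute)

lemma nn_integral_periodic_window_frac: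
  fixes h :: "real \<Rightarrow> ennreal"
  assumes [measurable]: "h \<in> borel_measurable borel" and per: "\<And>t. h (t + 1) = h t"
    and d: "0 \<le> d" "d < 1"
  shows "(\<integral>\<^sup>+ t. h t * indicator {d..d+1} t \<partial>lborel) = (\<integral>\<^sup>+ t. h t * indicator {0..1} t \<partial>lborel)"
proof -
  \<comment> \<open>move the piece of the window beyond 1 back by one period\<close>
  have "(\<integral>\<^sup>+ t. h t * indicator {d..d+1} t \<partial>lborel)
      = (\<integral>\<^sup>+ t. h t * indicator {d..1} t \<partial>lborel) + (\<integral>\<^sup>+ t. h t * indicator {1<..d+1} t \<partial>lborel)"
    using d by (subst nn_integral_add[symmetric]) (auto intro!: nn_integral_cong simp: indicator_def)
  also have "(\<integral>\<^sup>+ t. h t * indicator {1<..d+1} t \<partial>lborel)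
      = (\<integral>\<^sup>+ t. h (t + 1) * indicator {1<..d+1} (t + 1) \<partial>lborel)"
    by (rule nn_integral_lborel_shift[symmetric]) measurable
  also have "\<dots> = (\<integral>\<^sup>+ t. h t * indicator {0<..d} t \<partial>lborel)"
    by (intro nn_integral_cong) (auto simp: per indicator_def)
  also have "(\<integral>\<^sup>+ t. h t * indicator {d..1} t \<partial>lborel) + (\<integral>\<^sup>+ t. h t * indicator {0<..d} t \<partial>lborel)
      = (\<integral>\<^sup>+ t. h t * indicator {d..1} t + h t * indicator {0<..d} t \<partial>lborel)"
    by (rule nn_integral_add[symmetric]) auto
  also have "\<dots> = (\<integral>\<^sup>+ t. h t * indicator {0..1} t \<partial>lborel)"
  proof (rule nn_integral_cong_AE)
    show "AE t in lborel. h t * indicator {d..1} t + h t * indicator {0<..d} t = h t * indicator {0..1} t"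
      using AE_lborel_singleton[of 0] AE_lborel_singleton[of d]
      by eventually_elim (use d in \<open>auto simp: indicator_def\<close>)
  qed
  finally show ?thesis .
qed

lemma nn_integral_periodic_window:
  fixes h :: "real \<Rightarrow> ennreal"
  assumes [measurable]: "h \<in> borel_measurable borel" and per: "\<And>t. h (t + 1) = h t"
  shows "(\<integral>\<^sup>+ t. h t * indicator {a..a+1} t \<partial>lborel) = (\<integral>\<^sup>+ t. h t * indicator {0..1} t \<partial>lborel)"
proof -
  have "(\<integral>\<^sup>+ t. h t * indicator {a..a+1} t \<partial>lborel)
      = (\<integral>\<^sup>+ t. h (t + of_int \<lfloor>a\<rfloor>) * indicator {a..a+1} (t + of_int \<lfloor>a\<rfloor>) \<partial>lborel)"
    by (rule nn_integral_lborel_shift[symmetric]) measurable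
  also have "\<dots> = (\<integral>\<^sup>+ t. h t * indicator {frac a..frac a+1} t \<partial>lborel)"
    by (intro nn_integral_cong) (auto simp: periodic_add_of_int[of h, OF per] indicator_def frac_def)
  also have "\<dots> = (\<integral>\<^sup>+ t. h t * indicator {0..1} t \<partial>lborel)"
    by (rule nn_integral_periodic_window_frac) (auto simp: per frac_lt_1)
  finally show ?thesis .
qed

lemma measurable_frac_translate_unit_interval:
  "(\<lambda>t. frac (t + c)) \<in> unit_interval \<rightarrow>\<^sub>M unit_interval"
  by (intro measurable_frac_unit_interval borel_measurable_add borel_measurable_unit_interval_ident
      borel_measurable_const)

lemma distr_frac_translate_unit_interval:
  "distr unit_interval unit_interval (\<lambda>t. frac (t + c)) = unit_interval"
proof (rule measure_eqI)
  have I: "{0..1::real} \<inter> space lborel \<in> sets lborel"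
    by simp
  show "sets (distr unit_interval unit_interval (\<lambda>t. frac (t + c))) = sets unit_interval"
    by simp
  fix A assume "A \<in> sets (distr unit_interval unit_interval (\<lambda>t. frac (t + c)))"
  then have A: "A \<in> sets unit_interval" by simp
  then have [measurable]: "A \<in> sets borel" by (simp add: sets_restrict_space_iff)
  have "emeasure (distr unit_interval unit_interval (\<lambda>t. frac (t + c))) A
      = (\<integral>\<^sup>+ t. indicator A t \<partial>distr unit_interval unit_interval (\<lambda>t. frac (t + c)))"
    using A by simp
  also have "\<dots> = (\<integral>\<^sup>+ t. indicator A (frac (t + c)) \<partial>unit_interval)"
    using A by (intro nn_integral_distr measurable_frac_translate_unit_interval) simp
  also have "\<dots> = (\<integral>\<^sup>+ t. indicator A (frac (t + c)) * indicator {0..1} t \<partial>lborel)"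
    by (rule nn_integral_restrict_space[OF I])
  also have "\<dots> = (\<integral>\<^sup>+ t. indicator A (frac (t + c)) * indicator {c..c+1} (t + c) \<partial>lborel)"
  proof -
    have "indicator {c..c+1} (t + c) = (indicator {0..1} t :: ennreal)" for t
      by (simp add: indicator_def)
    then show ?thesis by (simp only:)
  qed
  also have "\<dots> = (\<integral>\<^sup>+ t. indicator A (frac t) * indicator {c..c+1} t \<partial>lborel)"
    by (rule nn_integral_lborel_shift)
       (auto intro!: borel_measurable_times_ennreal measurable_compose[OF borel_measurable_frac])
  also have "\<dots> = (\<integral>\<^sup>+ t. indicator A (frac t) * indicator {0..1} t \<partial>lborel)"
    by (rule nn_integral_periodic_window)
       (auto intro: measurable_compose[OF borel_measurable_frac] simp: frac_1_eq)
  also have "\<dots> = (\<integral>\<^sup>+ t. indicator A t * indicator {0..1} t \<partial>lborel)"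
    using AE_lborel_singleton[of 1]
    by (intro nn_integral_cong_AE, eventually_elim) (auto simp: indicator_def frac_eq)
  also have "\<dots> = emeasure unit_interval A"
    using A by (simp flip: nn_integral_indicator nn_integral_restrict_space[OF I])
  finally show "emeasure (distr unit_interval unit_interval (\<lambda>t. frac (t + c))) A = emeasure unit_interval A" .
qed

lemma prob_space_unit_cube: "prob_space (unit_cube L)"
  unfolding unit_cube_def by (rule prob_space_PiM) (rule prob_space_unit_interval)

lemma borel_measurable_unit_cube_component:
  assumes "j < L"
  shows "(\<lambda>x. x j) \<in> borel_measurable (unit_cube L)"
proof -
  have "(\<lambda>x. x j) \<in> unit_cube L \<rightarrow>\<^sub>M unit_interval"
    unfolding unit_cube_def using assms by (intro measurable_component_singleton) simp
  then show ?thesis by (rule measurable_compose[OF _ borel_measurable_unit_interval_ident])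
qed

lemma measurable_unit_cube_frac_translate:
  "(\<lambda>x. \<lambda>j\<in>{..<L}. frac (x j + c j)) \<in> unit_cube L \<rightarrow>\<^sub>M unit_cube L"
  unfolding unit_cube_def
proof (intro measurable_restrict)
  fix j :: nat assume "j \<in> {..<L}"
  then show "(\<lambda>x. frac (x j + c j)) \<in> Pi\<^sub>M {..<L} (\<lambda>_. unit_interval) \<rightarrow>\<^sub>M unit_interval"
    by (intro measurable_compose[OF measurable_component_singleton[where M="\<lambda>_. unit_interval"]
          measurable_frac_translate_unit_interval])
qed

lemma distr_unit_cube_frac_translate:
  "distr (unit_cube L) (unit_cube L) (\<lambda>x. \<lambda>j\<in>{..<L}. frac (x j + c j)) = unit_cube L"
proof -
  interpret product_prob_space "\<lambda>_::nat. unit_interval"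
    by (intro product_prob_spaceI prob_space_unit_interval)
  let ?T = "\<lambda>x. \<lambda>j\<in>{..<L}. frac (x j + c j)"
  note T = measurable_unit_cube_frac_translate[where L=L and c=c]
  show ?thesis unfolding unit_cube_def
  proof (rule PiM_eqI)
    fix A assume A: "\<And>j. j \<in> {..<L} \<Longrightarrow> A j \<in> sets unit_interval"
    have pre: "?T -` Pi\<^sub>E {..<L} A \<inter> space (unit_cube L)
        = Pi\<^sub>E {..<L} (\<lambda>j. (\<lambda>t. frac (t + c j)) -` A j \<inter> space unit_interval)"
      by (auto simp: unit_cube_def space_PiM PiE_def Pi_def extensional_def)
    have "Pi\<^sub>E {..<L} A \<in> sets (unit_cube L)"
      unfolding unit_cube_def using A by (intro sets_PiM_I_finite) auto
    then have "emeasure (distr (unit_cube L) (unit_cube L) ?T) (Pi\<^sub>E {..<L} A)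
        = emeasure (unit_cube L) (Pi\<^sub>E {..<L} (\<lambda>j. (\<lambda>t. frac (t + c j)) -` A j \<inter> space unit_interval))"
      by (simp only: emeasure_distr[OF T] pre)
    also have "\<dots> = (\<Prod>j<L. emeasure unit_interval ((\<lambda>t. frac (t + c j)) -` A j \<inter> space unit_interval))"
    proof -
      have "(\<lambda>t. frac (t + c j)) -` A j \<inter> space unit_interval \<in> sets unit_interval" if "j < L" for j
        using that A by (intro measurable_sets[OF measurable_frac_translate_unit_interval]) simp
      then show ?thesis
        unfolding unit_cube_def by (intro emeasure_PiM) auto
    qed
    also have "\<dots> = (\<Prod>j<L. emeasure unit_interval (A j))"
    proof (intro prod.cong refl)
      fix j assume "j \<in> {..<L}"
      then have "emeasure unit_interval ((\<lambda>t. frac (t + c j)) -` A j \<inter> space unit_interval)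
          = emeasure (distr unit_interval unit_interval (\<lambda>t. frac (t + c j))) (A j)"
        using A by (intro emeasure_distr[symmetric] measurable_frac_translate_unit_interval)
      then show "emeasure unit_interval ((\<lambda>t. frac (t + c j)) -` A j \<inter> space unit_interval)
          = emeasure unit_interval (A j)"
        by (simp only: distr_frac_translate_unit_interval)
    qed
    finally show "emeasure (distr (Pi\<^sub>M {..<L} (\<lambda>_. unit_interval)) (Pi\<^sub>M {..<L} (\<lambda>_. unit_interval)) ?T)
        (Pi\<^sub>E {..<L} A) = (\<Prod>j<L. emeasure unit_interval (A j))"
      by (simp only: unit_cube_def)
  qed (simp_all add: unit_cube_def)
qed

lemma distr_pair_measure_eq_of_slices:
  assumes "sigma_finite_measure M1" and "prob_space M2"
    and \<phi>[measurable]: "\<phi> \<in> M1 \<Otimes>\<^sub>M M2 \<rightarrow>\<^sub>M N"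
    and slices: "\<And>b. b \<in> space M2 \<Longrightarrow> distr M1 N (\<lambda>a. \<phi> (a, b)) = N"
  shows "distr (M1 \<Otimes>\<^sub>M M2) N \<phi> = N"
proof (rule measure_eqI)
  interpret M1: sigma_finite_measure M1 by fact
  interpret M2: prob_space M2 by fact
  interpret pair_sigma_finite M1 M2 ..
  show "sets (distr (M1 \<Otimes>\<^sub>M M2) N \<phi>) = sets N" by simp
  fix A assume "A \<in> sets (distr (M1 \<Otimes>\<^sub>M M2) N \<phi>)"
  then have A[measurable]: "A \<in> sets N" by simp
  have "emeasure (distr (M1 \<Otimes>\<^sub>M M2) N \<phi>) A = emeasure (M1 \<Otimes>\<^sub>M M2) (\<phi> -` A \<inter> space (M1 \<Otimes>\<^sub>M M2))"
    by (rule emeasure_distr[OF \<phi> A])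
  also have "\<dots> = (\<integral>\<^sup>+b. emeasure M1 ((\<lambda>a. (a, b)) -` (\<phi> -` A \<inter> space (M1 \<Otimes>\<^sub>M M2))) \<partial>M2)"
    by (rule emeasure_pair_measure_alt2) measurable
  also have "\<dots> = (\<integral>\<^sup>+b. emeasure N A \<partial>M2)"
  proof (rule nn_integral_cong)
    fix b assume b: "b \<in> space M2"
    have "(\<lambda>a. (a, b)) -` (\<phi> -` A \<inter> space (M1 \<Otimes>\<^sub>M M2)) = (\<lambda>a. \<phi> (a, b)) -` A \<inter> space M1"
      using b by (auto simp: space_pair_measure)
    also have "emeasure M1 \<dots> = emeasure (distr M1 N (\<lambda>a. \<phi> (a, b))) A"
      using b by (intro emeasure_distr[symmetric]) measurable
    finally show "emeasure M1 ((\<lambda>a. (a, b)) -` (\<phi> -` A \<inter> space (M1 \<Otimes>\<^sub>M M2))) = emeasure N A"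
      by (simp only: slices[OF b])
  qed
  also have "\<dots> = emeasure N A"
    by (simp add: M2.emeasure_space_1)
  finally show "emeasure (distr (M1 \<Otimes>\<^sub>M M2) N \<phi>) A = emeasure N A" .
qed

lemma measurable_unit_cube_frac_sum: "(\<lambda>y. frac (\<Sum>j<L. y j)) \<in> unit_cube L \<rightarrow>\<^sub>M unit_interval"
  by (intro measurable_frac_unit_interval borel_measurable_sum borel_measurable_unit_cube_component) simp

lemma distr_unit_cube_frac_sum:
  assumes "0 < L"
  shows "distr (unit_cube L) unit_interval (\<lambda>y. frac (\<Sum>j<L. y j)) = unit_interval"
proof -
  interpret product_prob_space "\<lambda>_::nat. unit_interval"
    by (intro product_prob_spaceI prob_space_unit_interval)
  define J where "J = {..<L} - {0}"
  have J: "{0} \<inter> J = {}" "finite J" "{0} \<union> J = {..<L}"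
    using assms by (auto simp: J_def)
  let ?S = "\<lambda>y. frac (\<Sum>j<L. y j)"
  let ?P0 = "Pi\<^sub>M {0::nat} (\<lambda>_. unit_interval)" and ?PJ = "Pi\<^sub>M J (\<lambda>_. unit_interval)"
  have merge: "merge {0} J \<in> ?P0 \<Otimes>\<^sub>M ?PJ \<rightarrow>\<^sub>M unit_cube L"
    unfolding unit_cube_def J(3)[symmetric] by (rule measurable_merge)
  have cube: "unit_cube L = distr (?P0 \<Otimes>\<^sub>M ?PJ) (unit_cube L) (merge {0} J)"
    unfolding unit_cube_def using distr_merge[OF J(1) _ J(2)] J(3) by simp
  have "distr (unit_cube L) unit_interval ?S = distr (?P0 \<Otimes>\<^sub>M ?PJ) unit_interval (?S \<circ> merge {0} J)"
    by (subst cube) (rule distr_distr[OF measurable_unit_cube_frac_sum merge])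
  also have "\<dots> = unit_interval"
  proof (rule distr_pair_measure_eq_of_slices)
    show "sigma_finite_measure ?P0" "prob_space ?PJ"
      by (auto intro!: prob_space_PiM prob_space_unit_interval prob_space_imp_sigma_finite)
    show "?S \<circ> merge {0} J \<in> ?P0 \<Otimes>\<^sub>M ?PJ \<rightarrow>\<^sub>M unit_interval"
      by (rule measurable_comp[OF merge measurable_unit_cube_frac_sum])
    fix b assume "b \<in> space ?PJ"
    \<comment> \<open>on each slice the sum is the coordinate 0 translated by a constant\<close>
    have "(\<Sum>j<L. merge {0} J (a, b) j) = a 0 + (\<Sum>j\<in>J. b j)" for a
      using J(1,2) unfolding J(3)[symmetric]
      by (simp add: sum.union_disjoint merge_def) (rule sum.cong; auto)
    then have "distr ?P0 unit_interval (\<lambda>a. (?S \<circ> merge {0} J) (a, b))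
        = distr ?P0 unit_interval ((\<lambda>t. frac (t + (\<Sum>j\<in>J. b j))) \<circ> (\<lambda>a. a 0))"
      by (simp add: comp_def)
    also have "\<dots> = distr (distr ?P0 unit_interval (\<lambda>a. a 0)) unit_interval (\<lambda>t. frac (t + (\<Sum>j\<in>J. b j)))"
      by (rule distr_distr[symmetric] measurable_frac_translate_unit_interval
          measurable_component_singleton | simp)+
    finally show "distr ?P0 unit_interval (\<lambda>a. (?S \<circ> merge {0} J) (a, b)) = unit_interval"
      by (simp add: distr_singleton distr_frac_translate_unit_interval)
  qed
  finally show ?thesis .
qed

lemma distr_PiM_unit_cube_frac_sum:
  assumes "0 < L"
  shows "distr (Pi\<^sub>M {..<L} (\<lambda>_. unit_cube L)) (unit_cube L) (\<lambda>Y. \<lambda>i\<in>{..<L}. frac (\<Sum>j<L. Y i j))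
       = unit_cube L"
proof -
  have compose: "compose {..<L} (\<lambda>y. frac (\<Sum>j<L. y j)) = (\<lambda>Y. \<lambda>i\<in>{..<L}. frac (\<Sum>j<L. Y i j))"
    by (simp add: fun_eq_iff compose_def)
  have "distr (Pi\<^sub>M {..<L} (\<lambda>_. unit_cube L)) (Pi\<^sub>M {..<L} (\<lambda>_. unit_interval))
          (compose {..<L} (\<lambda>y. frac (\<Sum>j<L. y j)))
      = Pi\<^sub>M {..<L} (\<lambda>_. distr (unit_cube L) unit_interval (\<lambda>y. frac (\<Sum>j<L. y j)))"
    by (intro distr_PiM_finite_prob_space' prob_space_unit_cube prob_space_unit_interval
        measurable_unit_cube_frac_sum) simp
  then show ?thesis
    unfolding compose by (simp add: distr_unit_cube_frac_sum[OF assms] flip: unit_cube_def)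
qed

definition gfun_axis :: "nat \<Rightarrow> (nat \<Rightarrow> nat \<Rightarrow> real \<Rightarrow> real) \<Rightarrow> nat \<Rightarrow> real \<Rightarrow> real" where
  "gfun_axis L f i s = gfun L f i (\<lambda>j. if j = 0 then s else 0)"

lemma gfun_cong: "(\<And>j. j < L \<Longrightarrow> y j = y' j) \<Longrightarrow> gfun L f i y = gfun L f i y'"
  unfolding gfun_def by (auto intro!: Bochner_Integration.integral_cong prod.cong)

lemma borel_measurable_cyclic_product:
  fixes f :: "nat \<Rightarrow> real \<Rightarrow> real"
  assumes cont: "\<And>j. j < L \<Longrightarrow> continuous_on UNIV (f j)"
  shows "(\<lambda>x. \<Prod>j<L. f j (x j - x ((j + 1) mod L) + y j)) \<in> borel_measurable (unit_cube L)"
proof (rule borel_measurable_prod)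
  fix j assume "j \<in> {..<L}"
  then have j: "j < L" "(j + 1) mod L < L" by auto
  have "(\<lambda>x. x j - x ((j + 1) mod L) + y j) \<in> borel_measurable (unit_cube L)"
    using borel_measurable_unit_cube_component[OF j(1)] borel_measurable_unit_cube_component[OF j(2)]
    by measurable
  then show "(\<lambda>x. f j (x j - x ((j + 1) mod L) + y j)) \<in> borel_measurable (unit_cube L)"
    by (rule measurable_compose) (rule borel_measurable_continuous_onI[OF cont[OF j(1)]])
qed

lemma gfun_frac_translate:
  assumes cont: "\<And>j. j < L \<Longrightarrow> continuous_on UNIV (f i j)"
    and per: "\<And>j t. j < L \<Longrightarrow> f i j (t + 1) = f i j t"
  shows "gfun L f i y = gfun L f i (\<lambda>j. y j + c j - c ((j + 1) mod L))"
proof -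
  let ?T = "\<lambda>x. \<lambda>j\<in>{..<L}. frac (x j + c j)"
  have T: "?T \<in> unit_cube L \<rightarrow>\<^sub>M unit_cube L"
    by (rule measurable_unit_cube_frac_translate)
  have "gfun L f i y
      = (\<integral>x. (\<Prod>j<L. f i j (x j - x ((j + 1) mod L) + y j)) \<partial>distr (unit_cube L) (unit_cube L) ?T)"
    unfolding gfun_def distr_unit_cube_frac_translate ..
  also have "\<dots> = (\<integral>x. (\<Prod>j<L. f i j (?T x j - ?T x ((j + 1) mod L) + y j)) \<partial>unit_cube L)"
    by (rule integral_distr[OF T borel_measurable_cyclic_product[OF cont]])
  also have "\<dots> = gfun L f i (\<lambda>j. y j + c j - c ((j + 1) mod L))"
    unfolding gfun_def
  proof (intro Bochner_Integration.integral_cong prod.cong refl)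
    fix x j assume "j \<in> {..<L}"
    then have j: "j < L" "(j + 1) mod L < L" by auto
    define k where "k = (j + 1) mod L"
    \<comment> \<open>reducing mod 1 only adds an integer to the argument of the 1-periodic f i j\<close>
    have "?T x j - ?T x k + y j
        = (x j - x k + (y j + c j - c k)) + of_int (\<lfloor>x k + c k\<rfloor> - \<lfloor>x j + c j\<rfloor>)"
      using j by (simp add: k_def frac_def)
    then show "f i j (?T x j - ?T x k + y j) = f i j (x j - x k + (y j + c j - c k))"
      by (simp only: periodic_add_of_int[of "f i j", OF per[OF j(1)]])
  qed
  finally show ?thesis .
qed

lemma gfun_eq_gfun_axis_sum:
  assumes L: "0 < L"
    and cont: "\<And>j. j < L \<Longrightarrow> continuous_on UNIV (f i j)"
    and per: "\<And>j t. j < L \<Longrightarrow> f i j (t + 1) = f i j t"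
  shows "gfun L f i y = gfun_axis L f i (\<Sum>k<L. y k)"
proof -
  define s where "s = (\<Sum>k<L. y k)"
  define t where "t = (\<lambda>j. (if j = 0 then s else 0) - y j)"
  define c where "c = (\<lambda>k. - (\<Sum>j<k. t j))"
  \<comment> \<open>c telescopes to t; the wrap-around term is covered because t sums to zero\<close>
  have t_sum: "(\<Sum>j<L. t j) = 0"
    using L by (simp add: t_def sum_subtractf s_def)
  have "y j + c j - c ((j + 1) mod L) = (if j = 0 then s else 0)" if j: "j < L" for j
  proof (cases "j + 1 < L")
    case True
    then show ?thesis by (simp add: c_def t_def)
  next
    case False
    then have "j + 1 = L" using j by simp
    then show ?thesis
      using t_sum sum.lessThan_Suc[of t j] by (simp add: c_def t_def)
  qed
  then have "gfun L f i (\<lambda>j. y j + c j - c ((j + 1) mod L)) = gfun_axis L f i s"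
    unfolding gfun_axis_def by (rule gfun_cong)
  then show ?thesis
    using gfun_frac_translate[where f=f and i=i, OF cont per] by (simp add: s_def)
qed

lemma gfun_axis_add_of_int:
  assumes per: "\<And>j t. j < L \<Longrightarrow> f i j (t + 1) = f i j t"
  shows "gfun_axis L f i (s + of_int k) = gfun_axis L f i s"
proof (rule periodic_add_of_int[where h="gfun_axis L f i"])
  fix s :: real
  have "f i j (x j - x ((j + 1) mod L) + (if j = 0 then s + 1 else 0))
      = f i j (x j - x ((j + 1) mod L) + (if j = 0 then s else 0))" if "j < L" for x j
  proof (cases "j = 0")
    case True
    then show ?thesis using per[OF that, of "x j - x ((j + 1) mod L) + s"] by (simp add: add.assoc)
  qed simp
  then show "gfun_axis L f i (s + 1) = gfun_axis L f i s"
    unfolding gfun_axis_def gfun_def by (auto intro!: Bochner_Integration.integral_cong prod.cong)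
qed

lemma borel_measurable_gfun_axis:
  assumes cont: "\<And>j. j < L \<Longrightarrow> continuous_on UNIV (f i j)"
  shows "gfun_axis L f i \<in> borel_measurable borel"
proof -
  interpret prob_space "unit_cube L" by (rule prob_space_unit_cube)
  have [measurable]: "(\<lambda>p. snd p j) \<in> borel_measurable (borel \<Otimes>\<^sub>M unit_cube L)" if "j < L" for j
    using measurable_snd borel_measurable_unit_cube_component[OF that] by (rule measurable_compose)
  have "(\<lambda>(s, x). \<Prod>j<L. f i j (x j - x ((j + 1) mod L) + (if j = 0 then s else 0)))
      \<in> borel_measurable (borel \<Otimes>\<^sub>M unit_cube L)"
    unfolding split_beta'
  proof (rule borel_measurable_prod)
    fix j assume "j \<in> {..<L}"
    then have j: "j < L" "(j + 1) mod L < L" by auto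
    have "(\<lambda>p. snd p j - snd p ((j + 1) mod L) + (if j = 0 then fst p else 0))
        \<in> borel_measurable (borel \<Otimes>\<^sub>M unit_cube L)"
      using j by measurable
    then show "(\<lambda>p. f i j (snd p j - snd p ((j + 1) mod L) + (if j = 0 then fst p else 0)))
        \<in> borel_measurable (borel \<Otimes>\<^sub>M unit_cube L)"
      by (rule measurable_compose) (rule borel_measurable_continuous_onI[OF cont[OF j(1)]])
  qed
  then show ?thesis
    unfolding gfun_axis_def gfun_def by (rule borel_measurable_lebesgue_integral)
qed

lemma measurable_PiM_unit_cube_frac_sum:
  "(\<lambda>Y. \<lambda>i\<in>{..<L}. frac (\<Sum>j<L. Y i j)) \<in> Pi\<^sub>M {..<L} (\<lambda>_. unit_cube L) \<rightarrow>\<^sub>M unit_cube L"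
proof -
  have "(\<lambda>Y. \<lambda>i\<in>{..<L}. frac (\<Sum>j<L. Y i j))
      \<in> Pi\<^sub>M {..<L} (\<lambda>_. unit_cube L) \<rightarrow>\<^sub>M Pi\<^sub>M {..<L} (\<lambda>_. unit_interval)"
    by (intro measurable_restrict measurable_compose[OF measurable_component_singleton[where M="\<lambda>_. unit_cube L"]
          measurable_unit_cube_frac_sum])
  then show ?thesis by (simp only: unit_cube_def[symmetric])
qed

lemma gfun_diff_eq_gfun_axis_frac_sum:
  assumes L: "0 < L"
    and cont: "\<And>j. j < L \<Longrightarrow> continuous_on UNIV (f i j)"
    and per: "\<And>j t. j < L \<Longrightarrow> f i j (t + 1) = f i j t"
  shows "gfun L f i (\<lambda>j. z' j - z j) = gfun_axis L f i (frac (\<Sum>j<L. z' j) - frac (\<Sum>j<L. z j))"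
proof -
  have "gfun L f i (\<lambda>j. z' j - z j) = gfun_axis L f i ((\<Sum>j<L. z' j) - (\<Sum>j<L. z j))"
    by (simp add: gfun_eq_gfun_axis_sum[where f=f and i=i, OF L cont per] sum_subtractf)
  also have "(\<Sum>j<L. z' j) - (\<Sum>j<L. z j)
      = (frac (\<Sum>j<L. z' j) - frac (\<Sum>j<L. z j)) + of_int (\<lfloor>\<Sum>j<L. z' j\<rfloor> - \<lfloor>\<Sum>j<L. z j\<rfloor>)"
    by (simp add: frac_def)
  also have "gfun_axis L f i \<dots> = gfun_axis L f i (frac (\<Sum>j<L. z' j) - frac (\<Sum>j<L. z j))"
    by (rule gfun_axis_add_of_int[where f=f and i=i, OF per])
  finally show ?thesis .
qed

lemma borel_measurable_cyclic_gfun_axis_product: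
  assumes cont: "\<And>i j. i < L \<Longrightarrow> j < L \<Longrightarrow> continuous_on UNIV (f i j)"
  shows "(\<lambda>y. \<Prod>i<L. gfun_axis L f i (y ((i + 1) mod L) - y i)) \<in> borel_measurable (unit_cube L)"
proof (rule borel_measurable_prod)
  fix i assume "i \<in> {..<L}"
  then have i: "i < L" "(i + 1) mod L < L" by auto
  have "(\<lambda>y. y ((i + 1) mod L) - y i) \<in> borel_measurable (unit_cube L)"
    using borel_measurable_unit_cube_component[OF i(1)] borel_measurable_unit_cube_component[OF i(2)]
    by measurable
  then show "(\<lambda>y. gfun_axis L f i (y ((i + 1) mod L) - y i)) \<in> borel_measurable (unit_cube L)"
    by (rule measurable_compose) (rule borel_measurable_gfun_axis[where f=f and i=i, OF cont[OF i(1)]])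
qed

theorem lemma2:
  fixes L :: nat and f :: "nat \<Rightarrow> nat \<Rightarrow> real \<Rightarrow> real"
  assumes "L \<ge> 2"
    and "\<And>i j. i < L \<Longrightarrow> j < L \<Longrightarrow> continuous_on UNIV (f i j)"
    and "\<And>i j t. i < L \<Longrightarrow> j < L \<Longrightarrow> f i j (t + 1) = f i j t"
  shows "(\<integral>Y. (\<Prod>i<L. gfun L f i (\<lambda>j. Y ((i + 1) mod L) j - Y i j))
            \<partial>PiM {..<L} (\<lambda>_. unit_cube L))
       = (\<integral>y. (\<Prod>i<L. gfun L f i (\<lambda>j. if j = 0 then y ((i + 1) mod L) - y i else 0))
            \<partial>unit_cube L)"
proof -
  have L: "0 < L" using assms(1) by simp
  define T where "T = (\<lambda>Y::nat \<Rightarrow> nat \<Rightarrow> real. \<lambda>i\<in>{..<L}. frac (\<Sum>j<L. Y i j))"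
  define K where "K = (\<lambda>y. \<Prod>i<L. gfun_axis L f i (y ((i + 1) mod L) - y i))"
  have "(\<Prod>i<L. gfun L f i (\<lambda>j. Y ((i + 1) mod L) j - Y i j)) = K (T Y)" for Y
    unfolding K_def using L
    by (intro prod.cong refl) (simp add: T_def gfun_diff_eq_gfun_axis_frac_sum assms(2,3))
  then have "(\<integral>Y. (\<Prod>i<L. gfun L f i (\<lambda>j. Y ((i + 1) mod L) j - Y i j)) \<partial>PiM {..<L} (\<lambda>_. unit_cube L))
      = (\<integral>Y. K (T Y) \<partial>PiM {..<L} (\<lambda>_. unit_cube L))"
    by simp
  also have "\<dots> = (\<integral>y. K y \<partial>distr (PiM {..<L} (\<lambda>_. unit_cube L)) (unit_cube L) T)"
    unfolding T_def K_def
    by (intro integral_distr[symmetric] measurable_PiM_unit_cube_frac_sum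
        borel_measurable_cyclic_gfun_axis_product assms(2))
  also have "\<dots> = (\<integral>y. K y \<partial>unit_cube L)"
    unfolding T_def distr_PiM_unit_cube_frac_sum[OF L] ..
  finally show ?thesis
    unfolding K_def gfun_axis_def .
qed

end
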